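(* Let $\Pi$ be a program with nested expressions and $X$ a set of atoms. If $X\not\models\Pi$, then $\Pi^X$ is classically equivalent to $\bot$. If $X\models\Pi$, then $\Pi^X$ is classically equivalent to the program obtained from $\Pi^{\underline X}$ by replacing every occurrence of every atom not belonging to $X$ by $\bot$.
   Context: Fix a set of propositional atoms. Formulas are built from atoms and $\bot$ using the binary connectives $\wedge,\vee,\to$; $\top$ abbreviates $\bot\to\bot$, $\neg F$ abbreviates $F\to\bot$, and $F\leftrightarrow G$ abbreviates $(F\to G)\wedge(G\to F)$. A theory is a set of formulas. Interpretations are sets $X$ of atoms, and $X\models F$ denotes classical satisfaction (an atom $a$ is true iff $a\in X$). The reduct $F^X$ of a formula $F$ relative to a set $X$ of atoms is defined recursively: $\bot^X=\bot$; for an atom $a$, $a^X=a$ if $a\in X$ and $a^X=\bot$ otherwise; for $\otimes\in\{\wedge,\vee,\to\}$, $(F\otimes G)^X=F^X\otimes G^X$ if $X\models F\otimes G$, and $(F\otimes G)^X=\bot$ otherwise. For a theory $\Gamma$, $\Gamma^X=\{F^X:F\in\Gamma\}$. A nested expression is a formula containing no implications other than those of the form $F\to\bot$ (i.e. $\neg F$) or $\bot\to\bot$ (i.e. $\top$). A rule with nested expressions is $F\leftarrow G$ with $F,G$ nested expressions, identified with the formula $G\to F$; a program with nested expressions is a set of such rules (so it is also a theory). The reduct $\Pi^{\underline X}$ (in the sense of Lifschitz, Tang and Turner 1999) is obtained from $\Pi$ by replacing, in each rule, each maximal subformula of the form $\neg F$ by $\top$ if $X\models\neg F$ and by $\bot$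 otherwise. *)

theory Defs
  imports Main
begin

datatype 'a form = Bot | Atom 'a | And "'a form" "'a form" | Or "'a form" "'a form"
  | Imp "'a form" "'a form"

abbreviation Top :: "'a form" where "Top \<equiv> Imp Bot Bot"
abbreviation Neg :: "'a form \<Rightarrow> 'a form" where "Neg F \<equiv> Imp F Bot"

fun sat :: "'a set \<Rightarrow> 'a form \<Rightarrow> bool" where
  "sat X Bot = False"
| "sat X (Atom a) = (a \<in> X)"
| "sat X (And F G) = (sat X F \<and> sat X G)"
| "sat X (Or F G) = (sat X F \<or> sat X G)"
| "sat X (Imp F G) = (sat X F \<longrightarrow> sat X G)"

definition sat_th :: "'a set \<Rightarrow> 'a form set \<Rightarrow> bool" where
  "sat_th X \<Gamma> = (\<forall>F\<in>\<Gamma>. sat X F)"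

definition equiv_th :: "'a form set \<Rightarrow> 'a form set \<Rightarrow> bool" where
  "equiv_th \<Gamma> \<Delta> = (\<forall>Y. sat_th Y \<Gamma> = sat_th Y \<Delta>)"

fun reduct :: "'a form \<Rightarrow> 'a set \<Rightarrow> 'a form" where
  "reduct Bot X = Bot"
| "reduct (Atom a) X = (if a \<in> X then Atom a else Bot)"
| "reduct (And F G) X = (if sat X (And F G) then And (reduct F X) (reduct G X) else Bot)"
| "reduct (Or F G) X = (if sat X (Or F G) then Or (reduct F X) (reduct G X) else Bot)"
| "reduct (Imp F G) X = (if sat X (Imp F G) then Imp (reduct F X) (reduct G X) else Bot)"

definition reduct_th :: "'a form set \<Rightarrow> 'a set \<Rightarrow> 'a form set" where
  "reduct_th \<Gamma> X = (\<lambda>F. reduct F X) ` \<Gamma>"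

fun nested :: "'a form \<Rightarrow> bool" where
  "nested Bot = True"
| "nested (Atom a) = True"
| "nested (And F G) = (nested F \<and> nested G)"
| "nested (Or F G) = (nested F \<and> nested G)"
| "nested (Imp F G) = (G = Bot \<and> nested F)"

text \<open>A rule F <- G is the pair (F, G) (head, body); a program is a set of rules.\<close>
type_synonym 'a rule = "'a form \<times> 'a form"

definition nested_program :: "'a rule set \<Rightarrow> bool" where
  "nested_program \<Pi> = (\<forall>(F, G)\<in>\<Pi>. nested F \<and> nested G)"

definition rule_form :: "'a rule \<Rightarrow> 'a form" where
  "rule_form r = Imp (snd r) (fst r)"

definition prog_th :: "'a rule set \<Rightarrow> 'a form set" where
  "prog_th \<Pi> = rule_form ` \<Pi>"

text \<open>Lifschitz-Tang-Turner reduct of a nested expression: each maximal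
  subformula Neg F is replaced by Top if X |= Neg F and by Bot otherwise.\<close>
fun ltt :: "'a form \<Rightarrow> 'a set \<Rightarrow> 'a form" where
  "ltt Bot X = Bot"
| "ltt (Atom a) X = Atom a"
| "ltt (And F G) X = And (ltt F X) (ltt G X)"
| "ltt (Or F G) X = Or (ltt F X) (ltt G X)"
| "ltt (Imp F G) X = (if G = Bot then (if sat X (Neg F) then Top else Bot)
                      else Imp (ltt F X) (ltt G X))"

definition ltt_program :: "'a rule set \<Rightarrow> 'a set \<Rightarrow> 'a rule set" where
  "ltt_program \<Pi> X = (\<lambda>(F, G). (ltt F X, ltt G X)) ` \<Pi>"

fun kill :: "'a set \<Rightarrow> 'a form \<Rightarrow> 'a form" where
  "kill X Bot = Bot"
| "kill X (Atom a) = (if a \<in> X then Atom a else Bot)"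
| "kill X (And F G) = And (kill X F) (kill X G)"
| "kill X (Or F G) = Or (kill X F) (kill X G)"
| "kill X (Imp F G) = Imp (kill X F) (kill X G)"

definition kill_program :: "'a set \<Rightarrow> 'a rule set \<Rightarrow> 'a rule set" where
  "kill_program X \<Pi> = (\<lambda>(F, G). (kill X F, kill X G)) ` \<Pi>"

end

theory Submission
  imports Defs
begin

text \<open>
  The reduct F^X of a formula that X does not satisfy is Bot, so if
  X violates some rule of the program, the reduct theory contains Bot and is
  equivalent to {Bot}.  Otherwise every rule is satisfied by X, and it suffices
  to compare the reduct of each rule with its counterpart in the transformed
  program, formula by formula.  The central fact is that for a nested
  expression F, an interpretation Y satisfies F^X iff X satisfies F and Y
  satisfies kill X (ltt F X): a negation inside F is evaluated in the reduct
  against X (exactly as the Lifschitz-Tang-Turner reduct does), and an atom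
  outside X becomes Bot (exactly as kill does).  The truth of X |= F needed in
  this equivalence is itself implied by any model of kill X (ltt F X).
\<close>

lemma reduct_unsat: "\<not> sat X F \<Longrightarrow> reduct F X = Bot"
  by (cases F) auto

text \<open>Any model of the transformed nested expression witnesses that X satisfies
  the original one; this supplies the side condition X |= F in the reduct.\<close>
lemma sat_kill_ltt_imp_sat:
  assumes "nested F" and "sat Y (kill X (ltt F X))"
  shows "sat X F"
  using assms by (induction F) (auto split: if_splits)

lemma sat_reduct_nested:
  assumes "nested F"
  shows "sat Y (reduct F X) = (sat X F \<and> sat Y (kill X (ltt F X)))"
  using assms
proof (induction F)
  case (Imp F G)
  then show ?case using reduct_unsat[of X F] by auto
qed (auto dest: sat_kill_ltt_imp_sat)

definition transform_rule :: "'a set \<Rightarrow> 'a rule \<Rightarrow> 'a rule" where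
  "transform_rule X r = (kill X (ltt (fst r) X), kill X (ltt (snd r) X))"

lemma sat_reduct_rule:
  assumes "nested (fst r)" and "nested (snd r)" and "sat X (rule_form r)"
  shows "sat Y (reduct (rule_form r) X) = sat Y (rule_form (transform_rule X r))"
  using assms sat_reduct_nested[OF assms(1), of Y X] sat_reduct_nested[OF assms(2), of Y X]
    sat_kill_ltt_imp_sat[OF assms(2), of Y X]
  by (auto simp: rule_form_def transform_rule_def)

lemma reduct_th_prog_th: "reduct_th (prog_th \<Pi>) X = (\<lambda>r. reduct (rule_form r) X) ` \<Pi>"
  by (simp add: reduct_th_def prog_th_def image_image)

lemma prog_th_kill_ltt:
  "prog_th (kill_program X (ltt_program \<Pi> X)) = (\<lambda>r. rule_form (transform_rule X r)) ` \<Pi>"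
proof -
  have "(\<lambda>(F, G). (kill X F, kill X G)) ((\<lambda>(F, G). (ltt F X, ltt G X)) r)
        = transform_rule X r" for r :: "'a rule"
    by (cases r) (simp add: transform_rule_def)
  then show ?thesis
    by (simp add: prog_th_def kill_program_def ltt_program_def image_image)
qed

lemma equiv_th_image:
  assumes "\<And>r Y. r \<in> A \<Longrightarrow> sat Y (f r) = sat Y (g r)"
  shows "equiv_th (f ` A) (g ` A)"
  using assms by (auto simp: equiv_th_def sat_th_def)

lemma equiv_th_Bot:
  assumes "Bot \<in> \<Gamma>"
  shows "equiv_th \<Gamma> {Bot}"
  using assms by (force simp: equiv_th_def sat_th_def)

theorem proposition1:
  fixes \<Pi> :: "'a rule set" and X :: "'a set"
  assumes "nested_program \<Pi>"
  shows "(\<not> sat_th X (prog_th \<Pi>) \<longrightarrow> equiv_th (reduct_th (prog_th \<Pi>) X) {Bot})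
       \<and> (sat_th X (prog_th \<Pi>) \<longrightarrow>
            equiv_th (reduct_th (prog_th \<Pi>) X) (prog_th (kill_program X (ltt_program \<Pi> X))))"
proof (intro conjI impI)
  assume "\<not> sat_th X (prog_th \<Pi>)"
  then obtain r where "r \<in> \<Pi>" and "\<not> sat X (rule_form r)"
    by (auto simp: sat_th_def prog_th_def)
  then have "Bot \<in> reduct_th (prog_th \<Pi>) X"
    by (force simp: reduct_th_prog_th reduct_unsat)
  then show "equiv_th (reduct_th (prog_th \<Pi>) X) {Bot}"
    by (rule equiv_th_Bot)
next
  assume X_model: "sat_th X (prog_th \<Pi>)"
  have "sat Y (reduct (rule_form r) X) = sat Y (rule_form (transform_rule X r))"
    if "r \<in> \<Pi>" for r Y
  proof (rule sat_reduct_rule)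
    show "nested (fst r)" "nested (snd r)"
      using assms that by (auto simp: nested_program_def)
    show "sat X (rule_form r)"
      using X_model that by (auto simp: sat_th_def prog_th_def)
  qed
  then show "equiv_th (reduct_th (prog_th \<Pi>) X) (prog_th (kill_program X (ltt_program \<Pi> X)))"
    unfolding reduct_th_prog_th prog_th_kill_ltt by (rule equiv_th_image)
qed

end
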